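(* Let $\phi\colon\mathbb{R}\to\mathbb{R}$ be an increasing homeomorphism with $\phi(0)=0$, let $f\colon\mathbb{R}\to\mathbb{R}$ be continuous, and let $h\colon[0,T]\times\mathbb{R}\to\mathbb{R}$ be a Carathéodory function satisfying: $(A_0)$ for all $t_0\in[0,T]$, $u_0\in\mathbb{R}$ and $\varepsilon>0$ there exists $\delta>0$ such that if $|t-t_0|<\delta$ and $|u-u_0|<\delta$ then $|h(t,u)-h(t,u_0)|<\varepsilon$ for a.e. $t$. Let $a>0$ and $\alpha\in\mathfrak{D}$ be such that $$(\phi(\alpha'(t)))'+f(\alpha(t))\alpha'(t)+h(t,\alpha(t))\ge a\quad\text{for a.e. }t\in[0,T].$$ Then $\alpha$ is a strict lower solution to $(\phi(u'))'+f(u)u'+h(t,u)=0$.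
   Context: $\mathcal{C}^1_T=\{u\in\mathcal{C}^1([0,T]):u(0)=u(T),\,u'(0)=u'(T)\}$ and $\mathfrak{D}=\{u\in\mathcal{C}^1_T:\phi(u')\text{ is absolutely continuous}\}$. A $T$-periodic solution of $(\phi(u'))'+f(u)u'+h(t,u)=0$ is a $u\in\mathfrak{D}$ satisfying the equation a.e. A function $\alpha\in\mathfrak{D}$ is a strict lower solution of this equation if $(\phi(\alpha'))'+f(\alpha)\alpha'+h(t,\alpha)>0$ for a.e. $t\in[0,T]$ and, whenever $u$ is a $T$-periodic solution with $u(t)\ge\alpha(t)$ for all $t\in[0,T]$, then $u(t)>\alpha(t)$ for all $t\in[0,T]$. A Carathéodory function is measurable in $t$, continuous in $u$, and for each $r>0$ bounded in absolute value on $[0,T]\times[-r,r]$ by an $L^1$ function of $t$. *)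

theory Defs
  imports "HOL-Analysis.Analysis"
begin

definition abs_continuous_on :: "real set \<Rightarrow> (real \<Rightarrow> real) \<Rightarrow> bool" where
  "abs_continuous_on S g \<longleftrightarrow>
     (\<forall>e>0. \<exists>d>0. \<forall>(n::nat) (a::nat \<Rightarrow> real) (b::nat \<Rightarrow> real).
        (\<forall>i<n. a i \<le> b i \<and> a i \<in> S \<and> b i \<in> S) \<and>
        (\<forall>i<n. \<forall>j<n. i \<noteq> j \<longrightarrow> b i \<le> a j \<or> b j \<le> a i) \<and>
        (\<Sum>i<n. b i - a i) < d
        \<longrightarrow> (\<Sum>i<n. \<bar>g (b i) - g (a i)\<bar>) < e)"

definition C1_T :: "real \<Rightarrow> (real \<Rightarrow> real) \<Rightarrow> (real \<Rightarrow> real) \<Rightarrow> bool" where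
  "C1_T T u u' \<longleftrightarrow>
     (\<forall>t\<in>{0..T}. (u has_real_derivative u' t) (at t within {0..T})) \<and>
     continuous_on {0..T} u' \<and> u 0 = u T \<and> u' 0 = u' T"

definition in_D :: "real \<Rightarrow> (real \<Rightarrow> real) \<Rightarrow> (real \<Rightarrow> real) \<Rightarrow> (real \<Rightarrow> real) \<Rightarrow> bool" where
  "in_D T \<phi> u u' \<longleftrightarrow> C1_T T u u' \<and> abs_continuous_on {0..T} (\<lambda>t. \<phi> (u' t))"

definition op_rel :: "real \<Rightarrow> (real \<Rightarrow> real) \<Rightarrow> (real \<Rightarrow> real) \<Rightarrow> (real \<Rightarrow> real \<Rightarrow> real)
    \<Rightarrow> (real \<Rightarrow> real) \<Rightarrow> (real \<Rightarrow> real) \<Rightarrow> (real \<Rightarrow> bool) \<Rightarrow> real \<Rightarrow> bool" where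
  "op_rel T \<phi> f h u u' R t \<longleftrightarrow>
     (\<exists>d. ((\<lambda>s. \<phi> (u' s)) has_real_derivative d) (at t within {0..T}) \<and>
          R (d + f (u t) * u' t + h t (u t)))"

definition periodic_solution ::
    "real \<Rightarrow> (real \<Rightarrow> real) \<Rightarrow> (real \<Rightarrow> real) \<Rightarrow> (real \<Rightarrow> real \<Rightarrow> real) \<Rightarrow> (real \<Rightarrow> real) \<Rightarrow> bool" where
  "periodic_solution T \<phi> f h u \<longleftrightarrow>
     (\<exists>u'. in_D T \<phi> u u' \<and>
        (AE t in lebesgue. t \<in> {0..T} \<longrightarrow> op_rel T \<phi> f h u u' (\<lambda>x. x = 0) t))"

definition strict_lower_solution ::
    "real \<Rightarrow> (real \<Rightarrow> real) \<Rightarrow> (real \<Rightarrow> real) \<Rightarrow> (real \<Rightarrow> real \<Rightarrow> real) \<Rightarrow> (real \<Rightarrow> real) \<Rightarrow> bool" where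
  "strict_lower_solution T \<phi> f h \<alpha> \<longleftrightarrow>
     (\<exists>\<alpha>'. in_D T \<phi> \<alpha> \<alpha>' \<and>
        (AE t in lebesgue. t \<in> {0..T} \<longrightarrow> op_rel T \<phi> f h \<alpha> \<alpha>' (\<lambda>x. x > 0) t)) \<and>
     (\<forall>u. periodic_solution T \<phi> f h u \<and> (\<forall>t\<in>{0..T}. u t \<ge> \<alpha> t)
          \<longrightarrow> (\<forall>t\<in>{0..T}. u t > \<alpha> t))"

definition caratheodory :: "real \<Rightarrow> (real \<Rightarrow> real \<Rightarrow> real) \<Rightarrow> bool" where
  "caratheodory T h \<longleftrightarrow>
     (\<forall>u. (\<lambda>t. h t u) \<in> borel_measurable (lebesgue_on {0..T})) \<and>
     (\<forall>t\<in>{0..T}. continuous_on UNIV (h t)) \<and>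
     (\<forall>r>0. \<exists>g. g integrable_on {0..T} \<and>
        (AE t in lebesgue. t \<in> {0..T} \<longrightarrow> (\<forall>u. \<bar>u\<bar> \<le> r \<longrightarrow> \<bar>h t u\<bar> \<le> g t)))"

definition cond_A0 :: "real \<Rightarrow> (real \<Rightarrow> real \<Rightarrow> real) \<Rightarrow> bool" where
  "cond_A0 T h \<longleftrightarrow>
     (\<forall>t0\<in>{0..T}. \<forall>u0 e. e > 0 \<longrightarrow> (\<exists>d>0.
        AE t in lebesgue. (t \<in> {0..T} \<and> \<bar>t - t0\<bar> < d) \<longrightarrow>
          (\<forall>u. \<bar>u - u0\<bar> < d \<longrightarrow> \<bar>h t u - h t u0\<bar> < e)))"

end

theory Submission
  imports Defs
begin

text \<open>If a periodic solution \<open>u \<ge> \<alpha>\<close> touched \<open>\<alpha>\<close>, then by periodicity it would do so at some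
  \<open>t\<^sub>0 \<in> (0, T]\<close>, where \<open>u - \<alpha>\<close> attains its minimum \<open>0\<close>, forcing \<open>u'(t\<^sub>0) = \<alpha>'(t\<^sub>0)\<close>.
  Near \<open>t\<^sub>0\<close>, continuity and (A0) bound the derivative of \<open>\<phi>(u') - \<phi>(\<alpha>')\<close> by \<open>-a/4\<close>
  almost everywhere; as this function is absolutely continuous and vanishes at \<open>t\<^sub>0\<close>, it is
  positive just before \<open>t\<^sub>0\<close>. So \<open>u - \<alpha>\<close> is strictly increasing there and hence negative
  shortly before \<open>t\<^sub>0\<close>, a contradiction.
  That an absolutely continuous function with derivative \<open>\<le> 0\<close> a.e. is nonincreasing is shown
  with a gauge combining the straddle lemma at good points with the negligibility of the
  exceptional set.\<close>

definition nonoverlapping_intervals :: "real set \<Rightarrow> nat \<Rightarrow> (nat \<Rightarrow> real) \<Rightarrow> (nat \<Rightarrow> real) \<Rightarrow> bool"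
  where "nonoverlapping_intervals S n a b \<longleftrightarrow>
    (\<forall>i<n. a i \<le> b i \<and> a i \<in> S \<and> b i \<in> S) \<and> (\<forall>i<n. \<forall>j<n. i \<noteq> j \<longrightarrow> b i \<le> a j \<or> b j \<le> a i)"

lemma abs_continuous_on_iff:
  "abs_continuous_on S g \<longleftrightarrow>
    (\<forall>e>0. \<exists>d>0. \<forall>n a b. nonoverlapping_intervals S n a b \<longrightarrow> (\<Sum>i<n. b i - a i) < d
       \<longrightarrow> (\<Sum>i<n. \<bar>g (b i) - g (a i)\<bar>) < e)"
  unfolding abs_continuous_on_def nonoverlapping_intervals_def by (simp only: imp_conjL)

lemma abs_continuous_onE:
  assumes "abs_continuous_on S g" and "e > 0"
  obtains d where "d > 0"
    and "\<And>n a b. nonoverlapping_intervals S n a b \<Longrightarrow> (\<Sum>i<n. b i - a i) < d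
           \<Longrightarrow> (\<Sum>i<n. \<bar>g (b i) - g (a i)\<bar>) < e"
  using assms unfolding abs_continuous_on_iff by blast

lemma abs_continuous_on_add:
  assumes "abs_continuous_on S g1" and "abs_continuous_on S g2"
  shows "abs_continuous_on S (\<lambda>t. g1 t + g2 t)"
  unfolding abs_continuous_on_iff
proof (intro allI impI)
  fix e :: real assume "e > 0"
  then have "e/2 > 0" by simp
  obtain d1 where "d1 > 0"
    and d1: "\<And>n a b. nonoverlapping_intervals S n a b \<Longrightarrow> (\<Sum>i<n. b i - a i) < d1
               \<Longrightarrow> (\<Sum>i<n. \<bar>g1 (b i) - g1 (a i)\<bar>) < e/2"
    using abs_continuous_onE[OF assms(1) \<open>e/2 > 0\<close>] by blast
  obtain d2 where "d2 > 0"
    and d2: "\<And>n a b. nonoverlapping_intervals S n a b \<Longrightarrow> (\<Sum>i<n. b i - a i) < d2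
               \<Longrightarrow> (\<Sum>i<n. \<bar>g2 (b i) - g2 (a i)\<bar>) < e/2"
    using abs_continuous_onE[OF assms(2) \<open>e/2 > 0\<close>] by blast
  have "(\<Sum>i<n. \<bar>g1 (b i) + g2 (b i) - (g1 (a i) + g2 (a i))\<bar>) < e"
    if "nonoverlapping_intervals S n a b" and "(\<Sum>i<n. b i - a i) < min d1 d2" for n a b
  proof -
    have "(\<Sum>i<n. \<bar>g1 (b i) + g2 (b i) - (g1 (a i) + g2 (a i))\<bar>)
        \<le> (\<Sum>i<n. \<bar>g1 (b i) - g1 (a i)\<bar>) + (\<Sum>i<n. \<bar>g2 (b i) - g2 (a i)\<bar>)"
      unfolding sum.distrib[symmetric] by (rule sum_mono) linarith
    also have "\<dots> < e" using d1[OF that(1)] d2[OF that(1)] that(2) by simp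
    finally show ?thesis .
  qed
  then show "\<exists>d>0. \<forall>n a b. nonoverlapping_intervals S n a b \<longrightarrow> (\<Sum>i<n. b i - a i) < d
      \<longrightarrow> (\<Sum>i<n. \<bar>g1 (b i) + g2 (b i) - (g1 (a i) + g2 (a i))\<bar>) < e"
    using \<open>d1 > 0\<close> \<open>d2 > 0\<close> by (intro exI[of _ "min d1 d2"]) simp
qed

lemma abs_continuous_on_cmult:
  assumes "abs_continuous_on S g"
  shows "abs_continuous_on S (\<lambda>t. c * g t)"
  unfolding abs_continuous_on_iff
proof (intro allI impI)
  fix e :: real assume "e > 0"
  then have "e / (\<bar>c\<bar> + 1) > 0" by simp
  then obtain d where "d > 0"
    and d: "\<And>n a b. nonoverlapping_intervals S n a b \<Longrightarrow> (\<Sum>i<n. b i - a i) < d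
              \<Longrightarrow> (\<Sum>i<n. \<bar>g (b i) - g (a i)\<bar>) < e / (\<bar>c\<bar> + 1)"
    using abs_continuous_onE[OF assms] by blast
  have "(\<Sum>i<n. \<bar>c * g (b i) - c * g (a i)\<bar>) < e"
    if "nonoverlapping_intervals S n a b" and "(\<Sum>i<n. b i - a i) < d" for n a b
  proof -
    have "(\<Sum>i<n. \<bar>c * g (b i) - c * g (a i)\<bar>) = \<bar>c\<bar> * (\<Sum>i<n. \<bar>g (b i) - g (a i)\<bar>)"
      by (simp add: sum_distrib_left abs_mult right_diff_distrib[symmetric])
    also have "\<dots> \<le> \<bar>c\<bar> * (e / (\<bar>c\<bar> + 1))"
      using d[OF that] by (intro mult_left_mono) auto
    also have "\<dots> < e" using \<open>e > 0\<close> by (simp add: field_simps)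
    finally show ?thesis .
  qed
  then show "\<exists>d>0. \<forall>n a b. nonoverlapping_intervals S n a b \<longrightarrow> (\<Sum>i<n. b i - a i) < d
      \<longrightarrow> (\<Sum>i<n. \<bar>c * g (b i) - c * g (a i)\<bar>) < e"
    using \<open>d > 0\<close> by blast
qed

lemma abs_continuous_on_ident: "abs_continuous_on S (\<lambda>t. t)"
  unfolding abs_continuous_on_iff
proof (intro allI impI)
  fix e :: real assume "e > 0"
  have "(\<Sum>i<n. \<bar>b i - a i\<bar>) = (\<Sum>i<n. b i - a i)" if "nonoverlapping_intervals S n a b" for n a b
    using that by (intro sum.cong) (auto simp: nonoverlapping_intervals_def)
  then show "\<exists>d>0. \<forall>n a b. nonoverlapping_intervals S n a b \<longrightarrow> (\<Sum>i<n. b i - a i) < d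
      \<longrightarrow> (\<Sum>i<n. \<bar>b i - a i\<bar>) < e"
    using \<open>e > 0\<close> by (intro exI[of _ e]) auto
qed

lemma abs_continuous_on_diff:
  assumes "abs_continuous_on S g1" and "abs_continuous_on S g2"
  shows "abs_continuous_on S (\<lambda>t. g1 t - g2 t)"
  using abs_continuous_on_add[OF assms(1) abs_continuous_on_cmult[OF assms(2), of "-1"]] by simp

lemma tagged_division_of_real_intervalD:
  fixes x y :: real
  assumes "p tagged_division_of {x..y}" and "(t, K) \<in> p"
  shows "K = {Inf K..Sup K}" and "x \<le> Inf K" and "Inf K \<le> t" and "t \<le> Sup K" and "Sup K \<le> y"
    and "Inf K \<in> K" and "Sup K \<in> K"
proof -
  obtain c d where "K = cbox c d" using tagged_division_ofD(4)[OF assms] by blast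
  then have K: "K = {c..d}" by (simp add: box_real)
  moreover have "t \<in> K" "K \<subseteq> {x..y}"
    using tagged_division_ofD(2,3)[OF assms] by auto
  ultimately have "c \<le> t" "t \<le> d" "x \<le> c" "d \<le> y" by auto
  with K show "K = {Inf K..Sup K}" "x \<le> Inf K" "Inf K \<le> t" "t \<le> Sup K" "Sup K \<le> y"
    "Inf K \<in> K" "Sup K \<in> K"
    by auto
qed

lemma interior_disjoint_real_intervals:
  fixes a1 b1 a2 b2 :: real
  assumes "a1 < b1" "a2 < b2" "interior {a1..b1} \<inter> interior {a2..b2} = {}"
  shows "b1 \<le> a2 \<or> b2 \<le> a1"
proof (rule ccontr)
  assume "\<not> ?thesis"
  then have "(max a1 a2 + min b1 b2) / 2 \<in> interior {a1..b1} \<inter> interior {a2..b2}"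
    using assms by auto
  with assms show False by auto
qed

lemma tagged_division_nonoverlapping_enumeration:
  fixes x y :: real
  assumes p: "p tagged_division_of {x..y}" and "{x..y} \<subseteq> S" and "q \<subseteq> p"
    and nondegenerate: "\<And>t K. (t, K) \<in> q \<Longrightarrow> Inf K < Sup K"
  obtains a b where "nonoverlapping_intervals S (card q) a b"
    and "\<And>F :: real \<Rightarrow> real \<Rightarrow> real. (\<Sum>i<card q. F (a i) (b i)) = (\<Sum>(t,K)\<in>q. F (Inf K) (Sup K))"
proof -
  note interval = tagged_division_of_real_intervalD[OF p]
  have "finite q" using p \<open>q \<subseteq> p\<close> finite_subset by blast
  then obtain h where h: "bij_betw h {..<card q} q"
    using ex_bij_betw_nat_finite[of q] by (auto simp: lessThan_atLeast0)
  define a b where "a i = Inf (snd (h i))" and "b i = Sup (snd (h i))" for i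
  have hq: "h i \<in> q" if "i < card q" for i using bij_betwE[OF h] that by simp
  have hp: "(fst (h i), snd (h i)) \<in> p" if "i < card q" for i using hq[OF that] \<open>q \<subseteq> p\<close> by auto
  have ab: "a i < b i" if "i < card q" for i
    using nondegenerate[of "fst (h i)" "snd (h i)"] hq[OF that] unfolding a_def b_def by simp
  have "a i \<le> b i \<and> a i \<in> S \<and> b i \<in> S" if "i < card q" for i
  proof -
    have "x \<le> a i" "b i \<le> y" "a i < b i"
      using interval(2,5)[OF hp[OF that]] ab[OF that] unfolding a_def b_def by auto
    then show ?thesis using assms(2) by auto
  qed
  moreover have "b i \<le> a j \<or> b j \<le> a i" if ij: "i < card q" "j < card q" "i \<noteq> j" for i j
  proof -
    have "(fst (h i), snd (h i)) \<noteq> (fst (h j), snd (h j))"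
      using h ij by (auto simp: bij_betw_def inj_on_def)
    then have "interior (snd (h i)) \<inter> interior (snd (h j)) = {}"
      using tagged_division_ofD(5)[OF p hp[OF ij(1)] hp[OF ij(2)]] by blast
    moreover have "snd (h i) = {a i..b i}" "snd (h j) = {a j..b j}"
      using interval(1)[OF hp[OF ij(1)]] interval(1)[OF hp[OF ij(2)]] unfolding a_def b_def .
    ultimately show ?thesis
      using interior_disjoint_real_intervals ab ij by metis
  qed
  ultimately have "nonoverlapping_intervals S (card q) a b"
    unfolding nonoverlapping_intervals_def by blast
  moreover have "(\<Sum>i<card q. F (a i) (b i)) = (\<Sum>(t,K)\<in>q. F (Inf K) (Sup K))"
    for F :: "real \<Rightarrow> real \<Rightarrow> real"
    using sum.reindex_bij_betw[OF h, of "\<lambda>(t, K). F (Inf K) (Sup K)"]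
    unfolding a_def b_def by (simp add: case_prod_unfold)
  ultimately show thesis using that by blast
qed

lemma abs_continuous_on_tagged_division_sum:
  fixes x y :: real
  assumes "abs_continuous_on S g" and "{x..y} \<subseteq> S" and "e > 0"
  obtains \<delta> where "\<delta> > 0"
    and "\<And>p q. p tagged_division_of {x..y} \<Longrightarrow> q \<subseteq> p \<Longrightarrow> (\<Sum>(t,K)\<in>q. Sup K - Inf K) < \<delta>
           \<Longrightarrow> (\<Sum>(t,K)\<in>q. \<bar>g (Sup K) - g (Inf K)\<bar>) < e"
proof -
  obtain \<delta> where "\<delta> > 0"
    and \<delta>: "\<And>n a b. nonoverlapping_intervals S n a b \<Longrightarrow> (\<Sum>i<n. b i - a i) < \<delta>
              \<Longrightarrow> (\<Sum>i<n. \<bar>g (b i) - g (a i)\<bar>) < e"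
    using abs_continuous_onE[OF assms(1,3)] by blast
  show thesis
  proof (rule that[OF \<open>\<delta> > 0\<close>])
    fix p q assume p: "p tagged_division_of {x..y}" and "q \<subseteq> p"
      and small: "(\<Sum>(t,K)\<in>q. Sup K - Inf K) < \<delta>"
    define q' where "q' = {z\<in>q. Inf (snd z) < Sup (snd z)}"
    have "finite q" using p \<open>q \<subseteq> p\<close> finite_subset by blast
    have degenerate: "Inf K = Sup K" if "(t, K) \<in> q" and "\<not> Inf K < Sup K" for t K
    proof -
      have "(t, K) \<in> p" using that(1) \<open>q \<subseteq> p\<close> by blast
      then show ?thesis using tagged_division_of_real_intervalD(3,4)[OF p] that(2) by fastforce
    qed
    have drop_degenerate: "(\<Sum>(t,K)\<in>q. F (Inf K) (Sup K)) = (\<Sum>(t,K)\<in>q'. F (Inf K) (Sup K))"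
      if "\<And>c. F c c = 0" for F :: "real \<Rightarrow> real \<Rightarrow> real"
      by (rule sum.mono_neutral_right[OF \<open>finite q\<close>]) (auto simp: q'_def that dest: degenerate)
    have "q' \<subseteq> p" using \<open>q \<subseteq> p\<close> unfolding q'_def by blast
    moreover have "Inf K < Sup K" if "(t, K) \<in> q'" for t K using that unfolding q'_def by simp
    ultimately obtain a b where "nonoverlapping_intervals S (card q') a b"
      and reindex: "\<And>F :: real \<Rightarrow> real \<Rightarrow> real. (\<Sum>i<card q'. F (a i) (b i)) = (\<Sum>(t,K)\<in>q'. F (Inf K) (Sup K))"
      using tagged_division_nonoverlapping_enumeration[OF p assms(2)] by blast
    then have "(\<Sum>i<card q'. \<bar>g (b i) - g (a i)\<bar>) < e"
      using \<delta> small drop_degenerate[of "\<lambda>c d. d - c"] reindex[of "\<lambda>c d. d - c"] by simp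
    then show "(\<Sum>(t,K)\<in>q. \<bar>g (Sup K) - g (Inf K)\<bar>) < e"
      using drop_degenerate[of "\<lambda>c d. \<bar>g d - g c\<bar>"] reindex[of "\<lambda>c d. \<bar>g d - g c\<bar>"] by simp
  qed
qed

lemma negligible_tagged_division_sum_small:
  fixes x y :: real
  assumes "negligible N" and "\<delta> > 0"
  obtains \<gamma> where "gauge \<gamma>"
    and "\<And>p. p tagged_division_of {x..y} \<Longrightarrow> \<gamma> fine p
           \<Longrightarrow> (\<Sum>(t,K)\<in>{z\<in>p. fst z \<in> N}. Sup K - Inf K) < \<delta>"
proof -
  have "(indicator N has_integral (0::real)) {x..y}"
    by (rule has_integral_negligible[OF assms(1)]) (auto simp: indicator_def)
  then obtain \<gamma> where "gauge \<gamma>" and \<gamma>: "\<And>p. p tagged_division_of {x..y} \<Longrightarrow> \<gamma> fine p \<Longrightarrow>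
      norm ((\<Sum>(t,K)\<in>p. Henstock_Kurzweil_Integration.content K *\<^sub>R (indicator N t :: real)) - 0) < \<delta>"
    using assms(2) unfolding has_integral_real by meson
  show thesis
  proof (rule that[OF \<open>gauge \<gamma>\<close>])
    fix p assume p: "p tagged_division_of {x..y}" and "\<gamma> fine p"
    note interval = tagged_division_of_real_intervalD[OF p]
    have "Sup K - Inf K = Henstock_Kurzweil_Integration.content K *\<^sub>R indicator N t"
      if "(t, K) \<in> p" and "t \<in> N" for t K
    proof -
      have "Henstock_Kurzweil_Integration.content K
          = Henstock_Kurzweil_Integration.content {Inf K..Sup K}"
        using interval(1)[OF that(1)] by (rule arg_cong)
      also have "\<dots> = Sup K - Inf K"
        using interval(3,4)[OF that(1)] by simp
      finally show ?thesis using that(2) by simp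
    qed
    then have "(\<Sum>(t,K)\<in>{z\<in>p. fst z \<in> N}. Sup K - Inf K)
        = (\<Sum>(t,K)\<in>{z\<in>p. fst z \<in> N}. Henstock_Kurzweil_Integration.content K *\<^sub>R indicator N t)"
      by (intro sum.cong refl) force
    also have "\<dots> \<le> (\<Sum>(t,K)\<in>p. Henstock_Kurzweil_Integration.content K *\<^sub>R indicator N t)"
      by (rule sum_mono2[OF tagged_division_ofD(1)[OF p]]) (auto simp: case_prod_unfold)
    also have "\<dots> < \<delta>" using \<gamma>[OF p \<open>\<gamma> fine p\<close>] by simp
    finally show "(\<Sum>(t,K)\<in>{z\<in>p. fst z \<in> N}. Sup K - Inf K) < \<delta>" .
  qed
qed

lemma has_real_derivative_straddle:
  assumes "(g has_real_derivative D) (at t within S)" and "D \<le> B" and "e > 0"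
  obtains r where "r > 0"
    and "\<And>c d. c \<in> S \<Longrightarrow> d \<in> S \<Longrightarrow> c \<le> t \<Longrightarrow> t \<le> d \<Longrightarrow> \<bar>c - t\<bar> < r \<Longrightarrow> \<bar>d - t\<bar> < r
           \<Longrightarrow> g d - g c \<le> (B + e) * (d - c)"
proof -
  have "(g has_derivative (\<lambda>h. D * h)) (at t within S)"
    using assms(1) by (simp add: has_field_derivative_def)
  then obtain r where "r > 0"
    and r: "\<And>s. s \<in> S \<Longrightarrow> \<bar>s - t\<bar> < r \<Longrightarrow> \<bar>g s - g t - D * (s - t)\<bar> \<le> e * \<bar>s - t\<bar>"
    using assms(3) unfolding has_derivative_within_alt real_norm_def by meson
  show thesis
  proof (rule that[OF \<open>r > 0\<close>])
    fix c d assume cd: "c \<in> S" "d \<in> S" "c \<le> t" "t \<le> d" "\<bar>c - t\<bar> < r" "\<bar>d - t\<bar> < r"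
    have "g d - g t - D * (d - t) \<le> e * (d - t)"
      using r[of d] cd by (simp add: abs_le_iff)
    moreover have "g t - g c - D * (t - c) \<le> e * (t - c)"
      using r[of c] cd by (simp add: abs_le_iff algebra_simps)
    moreover have "D * (d - t) \<le> B * (d - t)" "D * (t - c) \<le> B * (t - c)"
      using assms(2) cd by (simp_all add: mult_right_mono)
    moreover have "(B + e) * (d - c) = B * (d - t) + e * (d - t) + B * (t - c) + e * (t - c)"
      by (simp add: algebra_simps)
    ultimately show "g d - g c \<le> (B + e) * (d - c)" by linarith
  qed
qed

lemma nonpositive_derivative_gauge:
  fixes g :: "real \<Rightarrow> real"
  assumes "e > 0"
    and "\<And>t. t \<in> {x..y} \<Longrightarrow> t \<notin> N \<Longrightarrow> \<exists>D. (g has_real_derivative D) (at t within S) \<and> D \<le> 0"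
    and "{x..y} \<subseteq> S"
  obtains \<gamma> where "gauge \<gamma>"
    and "\<And>p t K. p tagged_division_of {x..y} \<Longrightarrow> \<gamma> fine p \<Longrightarrow> (t, K) \<in> p \<Longrightarrow> t \<notin> N
           \<Longrightarrow> g (Sup K) - g (Inf K) \<le> e * (Sup K - Inf K)"
proof -
  have local_straddle: "\<exists>r>0. t \<in> {x..y} \<and> t \<notin> N \<longrightarrow> (\<forall>c d. c \<in> S \<longrightarrow> d \<in> S \<longrightarrow> c \<le> t \<longrightarrow> t \<le> d
      \<longrightarrow> \<bar>c - t\<bar> < r \<longrightarrow> \<bar>d - t\<bar> < r \<longrightarrow> g d - g c \<le> e * (d - c))" for t
  proof (cases "t \<in> {x..y} \<and> t \<notin> N")
    case True
    then obtain D where D: "(g has_real_derivative D) (at t within S)" "D \<le> 0"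
      using assms(2) by blast
    obtain r where "r > 0" and "\<And>c d. c \<in> S \<Longrightarrow> d \<in> S \<Longrightarrow> c \<le> t \<Longrightarrow> t \<le> d
        \<Longrightarrow> \<bar>c - t\<bar> < r \<Longrightarrow> \<bar>d - t\<bar> < r \<Longrightarrow> g d - g c \<le> (0 + e) * (d - c)"
      by (fact has_real_derivative_straddle[OF D assms(1)])
    then show ?thesis by auto
  qed (intro exI[of _ "1::real"], auto)
  from choice[OF allI[OF local_straddle]] obtain r where r: "\<forall>t. r t > 0 \<and> (t \<in> {x..y} \<and> t \<notin> N
      \<longrightarrow> (\<forall>c d. c \<in> S \<longrightarrow> d \<in> S \<longrightarrow> c \<le> t \<longrightarrow> t \<le> d
      \<longrightarrow> \<bar>c - t\<bar> < r t \<longrightarrow> \<bar>d - t\<bar> < r t \<longrightarrow> g d - g c \<le> e * (d - c)))" ..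
  then have r_pos: "\<And>t. r t > 0" and straddle: "\<And>t c d. t \<in> {x..y} \<Longrightarrow> t \<notin> N
      \<Longrightarrow> c \<in> S \<Longrightarrow> d \<in> S \<Longrightarrow> c \<le> t \<Longrightarrow> t \<le> d \<Longrightarrow> \<bar>c - t\<bar> < r t \<Longrightarrow> \<bar>d - t\<bar> < r t
      \<Longrightarrow> g d - g c \<le> e * (d - c)"
    by blast+
  show thesis
  proof (rule that)
    show "gauge (\<lambda>t. ball t (r t))" using r_pos by (intro gauge_ball_dependent) blast
    fix p t K assume p: "p tagged_division_of {x..y}" and "(\<lambda>t. ball t (r t)) fine p"
      and "(t, K) \<in> p" and "t \<notin> N"
    note interval = tagged_division_of_real_intervalD[OF p \<open>(t, K) \<in> p\<close>]
    have "K \<subseteq> ball t (r t)" using \<open>_ fine p\<close> \<open>(t, K) \<in> p\<close> unfolding fine_def by blast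
    then have "\<bar>Inf K - t\<bar> < r t" "\<bar>Sup K - t\<bar> < r t"
      using interval(6,7) by (auto simp: dist_real_def abs_minus_commute)
    moreover have "t \<in> {x..y}" "Inf K \<in> S" "Sup K \<in> S" using interval(2-5) assms(3) by auto
    ultimately show "g (Sup K) - g (Inf K) \<le> e * (Sup K - Inf K)"
      using straddle[of t "Inf K" "Sup K"] interval(3,4) \<open>t \<notin> N\<close> by blast
  qed
qed

lemma tagged_division_increment_le:
  fixes g :: "real \<Rightarrow> real"
  assumes "x \<le> y" and p: "p tagged_division_of {x..y}" and "e \<ge> 0"
    and good: "\<And>t K. (t, K) \<in> p \<Longrightarrow> t \<notin> N \<Longrightarrow> g (Sup K) - g (Inf K) \<le> e * (Sup K - Inf K)"
    and bad: "(\<Sum>(t,K)\<in>{z\<in>p. fst z \<in> N}. \<bar>g (Sup K) - g (Inf K)\<bar>) \<le> c"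
  shows "g y - g x \<le> e * (y - x) + c"
proof -
  note interval = tagged_division_of_real_intervalD[OF p]
  have "finite p" using p by (rule tagged_division_ofD(1))
  define pN where "pN = {z\<in>p. fst z \<in> N}"
  have "pN \<subseteq> p" unfolding pN_def by blast
  have "g y - g x = (\<Sum>(t,K)\<in>p. g (Sup K) - g (Inf K))"
    using additive_tagged_division_1[OF assms(1) p, of g] by simp
  also have "\<dots> = (\<Sum>(t,K)\<in>p - pN. g (Sup K) - g (Inf K)) + (\<Sum>(t,K)\<in>pN. g (Sup K) - g (Inf K))"
    using sum.subset_diff[OF \<open>pN \<subseteq> p\<close> \<open>finite p\<close>] by simp
  also have "\<dots> \<le> (\<Sum>(t,K)\<in>p - pN. e * (Sup K - Inf K)) + (\<Sum>(t,K)\<in>pN. \<bar>g (Sup K) - g (Inf K)\<bar>)"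
    using good unfolding pN_def by (intro add_mono sum_mono) (auto simp: case_prod_unfold)
  also have "\<dots> \<le> e * (y - x) + c"
  proof (rule add_mono)
    have "(\<Sum>(t,K)\<in>p - pN. Sup K - Inf K) \<le> (\<Sum>(t,K)\<in>p. Sup K - Inf K)"
      using interval(3,4) by (intro sum_mono2[OF \<open>finite p\<close>]) force+
    also have "\<dots> = y - x"
      using additive_tagged_division_1[OF assms(1) p, of "\<lambda>s. s"] by simp
    finally show "(\<Sum>(t,K)\<in>p - pN. e * (Sup K - Inf K)) \<le> e * (y - x)"
      using \<open>e \<ge> 0\<close> by (simp add: sum_distrib_left[symmetric] case_prod_unfold mult_left_mono)
  qed (use bad in \<open>simp add: pN_def\<close>)
  finally show ?thesis .
qed

lemma abs_continuous_on_nonincreasing: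
  fixes g :: "real \<Rightarrow> real"
  assumes "x \<le> y" and "{x..y} \<subseteq> S" and "abs_continuous_on S g" and "negligible N"
    and "\<And>t. t \<in> {x..y} \<Longrightarrow> t \<notin> N \<Longrightarrow> \<exists>D. (g has_real_derivative D) (at t within S) \<and> D \<le> 0"
  shows "g y \<le> g x"
proof -
  have increment: "g y - g x \<le> e * (y - x) + e" if "e > 0" for e
  proof -
    obtain \<delta> where "\<delta> > 0" and variation: "\<And>p q. p tagged_division_of {x..y} \<Longrightarrow> q \<subseteq> p
        \<Longrightarrow> (\<Sum>(t,K)\<in>q. Sup K - Inf K) < \<delta> \<Longrightarrow> (\<Sum>(t,K)\<in>q. \<bar>g (Sup K) - g (Inf K)\<bar>) < e"
      by (fact abs_continuous_on_tagged_division_sum[OF assms(3,2) \<open>e > 0\<close>])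
    obtain \<gamma>1 where "gauge \<gamma>1" and small: "\<And>p. p tagged_division_of {x..y} \<Longrightarrow> \<gamma>1 fine p
        \<Longrightarrow> (\<Sum>(t,K)\<in>{z\<in>p. fst z \<in> N}. Sup K - Inf K) < \<delta>"
      by (fact negligible_tagged_division_sum_small[OF assms(4) \<open>\<delta> > 0\<close>])
    obtain \<gamma>2 where "gauge \<gamma>2" and good: "\<And>p t K. p tagged_division_of {x..y} \<Longrightarrow> \<gamma>2 fine p
        \<Longrightarrow> (t, K) \<in> p \<Longrightarrow> t \<notin> N \<Longrightarrow> g (Sup K) - g (Inf K) \<le> e * (Sup K - Inf K)"
      by (rule nonpositive_derivative_gauge[OF \<open>e > 0\<close> assms(5,2)]) blast+
    obtain p where p: "p tagged_division_of {x..y}" and fine: "(\<lambda>t. \<gamma>1 t \<inter> \<gamma>2 t) fine p"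
      by (fact fine_division_exists_real[OF gauge_Int[OF \<open>gauge \<gamma>1\<close> \<open>gauge \<gamma>2\<close>]])
    have "\<gamma>1 fine p" "\<gamma>2 fine p" using fine unfolding fine_Int by blast+
    have "(\<Sum>(t,K)\<in>{z\<in>p. fst z \<in> N}. \<bar>g (Sup K) - g (Inf K)\<bar>) \<le> e"
      using variation[OF p _ small[OF p \<open>\<gamma>1 fine p\<close>]] by (simp add: less_imp_le)
    then show ?thesis
      using tagged_division_increment_le[OF assms(1) p _ good[OF p \<open>\<gamma>2 fine p\<close>]] \<open>e > 0\<close> by simp
  qed
  show ?thesis
  proof (rule field_le_epsilon)
    fix \<epsilon> :: real assume "\<epsilon> > 0"
    define e where "e = \<epsilon> / (y - x + 1)"
    have "y - x + 1 > 0" using assms(1) by linarith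
    then have "e > 0" using \<open>\<epsilon> > 0\<close> by (simp add: e_def)
    have "e * (y - x) + e = e * (y - x + 1)" by (simp add: algebra_simps)
    also have "\<dots> = \<epsilon>" using \<open>y - x + 1 > 0\<close> by (simp add: e_def)
    finally have "e * (y - x) + e = \<epsilon>" .
    then show "g y \<le> g x + \<epsilon>" using increment[OF \<open>e > 0\<close>] by linarith
  qed
qed

lemma abs_continuous_on_increment_le:
  fixes g :: "real \<Rightarrow> real"
  assumes "x \<le> y" and "{x..y} \<subseteq> S" and "abs_continuous_on S g" and "negligible N"
    and "\<And>t. t \<in> {x..y} \<Longrightarrow> t \<notin> N \<Longrightarrow> \<exists>D. (g has_real_derivative D) (at t within S) \<and> D \<le> c"
  shows "g y - g x \<le> c * (y - x)"
proof -
  have "abs_continuous_on S (\<lambda>s. g s - c * s)"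
    by (intro abs_continuous_on_diff abs_continuous_on_cmult abs_continuous_on_ident assms(3))
  moreover have "\<exists>D. ((\<lambda>s. g s - c * s) has_real_derivative D) (at t within S) \<and> D \<le> 0"
    if t: "t \<in> {x..y}" "t \<notin> N" for t
  proof -
    obtain D where "(g has_real_derivative D) (at t within S)" "D \<le> c" using assms(5)[OF t] by blast
    then have "((\<lambda>s. g s - c * s) has_real_derivative D - c) (at t within S)"
      by (auto intro!: derivative_eq_intros)
    then show ?thesis using \<open>D \<le> c\<close> by force
  qed
  ultimately have "g y - c * y \<le> g x - c * x"
    using abs_continuous_on_nonincreasing[OF assms(1,2) _ assms(4)] by blast
  then show ?thesis by (simp add: algebra_simps)
qed

lemma has_real_derivative_nonneg_at_min:
  fixes w :: "real \<Rightarrow> real"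
  assumes "(w has_real_derivative D) (at t within {x..y})" and "x \<le> t" and "t < y"
    and "\<And>s. s \<in> {x..y} \<Longrightarrow> w t \<le> w s"
  shows "D \<ge> 0"
proof (rule ccontr)
  assume "\<not> D \<ge> 0"
  then obtain d where "d > 0" and dec: "\<And>h. h > 0 \<Longrightarrow> t + h \<in> {x..y} \<Longrightarrow> h < d \<Longrightarrow> w (t + h) < w t"
    using has_real_derivative_neg_dec_right[OF assms(1)] by force
  define h where "h = min d (y - t) / 2"
  have "h > 0" and "h < d" and "h \<le> y - t" using \<open>d > 0\<close> assms(3) unfolding h_def by auto
  moreover from this have "t + h \<in> {x..y}" using assms(2,3) by auto
  ultimately have "w (t + h) < w t" and "w t \<le> w (t + h)" using dec assms(4) by auto
  then show False by linarith
qed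

lemma has_real_derivative_nonpos_at_min:
  fixes w :: "real \<Rightarrow> real"
  assumes "(w has_real_derivative D) (at t within {x..y})" and "x < t" and "t \<le> y"
    and "\<And>s. s \<in> {x..y} \<Longrightarrow> w t \<le> w s"
  shows "D \<le> 0"
proof (rule ccontr)
  assume "\<not> D \<le> 0"
  then obtain d where "d > 0" and inc: "\<And>h. h > 0 \<Longrightarrow> t - h \<in> {x..y} \<Longrightarrow> h < d \<Longrightarrow> w (t - h) < w t"
    using has_real_derivative_pos_inc_left[OF assms(1)] by force
  define h where "h = min d (t - x) / 2"
  have "h > 0" and "h < d" and "h \<le> t - x" using \<open>d > 0\<close> assms(2) unfolding h_def by auto
  moreover from this have "t - h \<in> {x..y}" using assms(2,3) by auto
  ultimately have "w (t - h) < w t" and "w t \<le> w (t - h)" using inc assms(4) by auto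
  then show False by linarith
qed

lemma C1_T_contact_derivative_eq:
  assumes "T > 0" and u: "C1_T T u v" and \<alpha>: "C1_T T \<alpha> \<alpha>'"
    and below: "\<And>t. t \<in> {0..T} \<Longrightarrow> \<alpha> t \<le> u t" and "t0 \<in> {0<..T}" and "u t0 = \<alpha> t0"
  shows "v t0 = \<alpha>' t0"
proof -
  define w where "w t = u t - \<alpha> t" for t
  have w': "(w has_real_derivative v t - \<alpha>' t) (at t within {0..T})" if "t \<in> {0..T}" for t
    using u \<alpha> that unfolding w_def C1_T_def by (auto intro!: derivative_eq_intros)
  have min: "w t \<le> w s" if "w t = 0" "s \<in> {0..T}" for t s
    using below[OF that(2)] that(1) unfolding w_def by simp
  have "v t0 - \<alpha>' t0 \<le> 0"
    using \<open>t0 \<in> {0<..T}\<close> \<open>u t0 = \<alpha> t0\<close>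
    by (intro has_real_derivative_nonpos_at_min[OF w'] min) (auto simp: w_def)
  moreover have "v t0 - \<alpha>' t0 \<ge> 0"
  proof (cases "t0 < T")
    case True
    then show ?thesis using \<open>t0 \<in> {0<..T}\<close> \<open>u t0 = \<alpha> t0\<close>
      by (intro has_real_derivative_nonneg_at_min[OF w'] min) (auto simp: w_def)
  next
    case False
    then have "t0 = T" using \<open>t0 \<in> {0<..T}\<close> by simp
    with u \<alpha> \<open>u t0 = \<alpha> t0\<close> have "w 0 = 0" "v 0 - \<alpha>' 0 = v t0 - \<alpha>' t0"
      unfolding w_def C1_T_def by auto
    moreover have "v 0 - \<alpha>' 0 \<ge> 0"
      using \<open>T > 0\<close> \<open>w 0 = 0\<close> by (intro has_real_derivative_nonneg_at_min[OF w'] min) auto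
    ultimately show ?thesis by simp
  qed
  ultimately show ?thesis by simp
qed

lemma op_rel_gap_derivative_le:
  fixes a c t :: real
  assumes "op_rel T \<phi> f h u v (\<lambda>x. x = 0) t" and "op_rel T \<phi> f h \<alpha> \<alpha>' (\<lambda>x. x \<ge> a) t"
    and "\<bar>f (u t) * v t - f (\<alpha> t) * \<alpha>' t\<bar> < a/4"
    and "\<bar>h t (u t) - h t c\<bar> < a/4" and "\<bar>h t (\<alpha> t) - h t c\<bar> < a/4"
  shows "\<exists>D. ((\<lambda>s. \<phi> (v s) - \<phi> (\<alpha>' s)) has_real_derivative D) (at t within {0..T}) \<and> D \<le> - a/4"
proof -
  obtain d1 where d1: "((\<lambda>s. \<phi> (v s)) has_real_derivative d1) (at t within {0..T})"
    "d1 + f (u t) * v t + h t (u t) = 0"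
    using assms(1) unfolding op_rel_def by blast
  obtain d2 where d2: "((\<lambda>s. \<phi> (\<alpha>' s)) has_real_derivative d2) (at t within {0..T})"
    "a \<le> d2 + f (\<alpha> t) * \<alpha>' t + h t (\<alpha> t)"
    using assms(2) unfolding op_rel_def by blast
  have "d1 - d2 \<le> - a/4"
    using d1(2) d2(2) assms(3-5) unfolding abs_less_iff by linarith
  moreover have "((\<lambda>s. \<phi> (v s) - \<phi> (\<alpha>' s)) has_real_derivative d1 - d2) (at t within {0..T})"
    using d1(1) d2(1) by (rule DERIV_diff)
  ultimately show ?thesis by blast
qed

lemma phi_derivative_gap_near_contact:
  fixes T a t0 :: real and \<phi> f u v \<alpha> \<alpha>' :: "real \<Rightarrow> real" and h :: "real \<Rightarrow> real \<Rightarrow> real"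
  assumes f: "continuous_on UNIV f" and "cond_A0 T h" and "a > 0"
    and cont: "continuous_on {0..T} u" "continuous_on {0..T} v"
      "continuous_on {0..T} \<alpha>" "continuous_on {0..T} \<alpha>'"
    and t0: "t0 \<in> {0..T}" "u t0 = \<alpha> t0" "v t0 = \<alpha>' t0"
    and u_eq: "AE t in lebesgue. t \<in> {0..T} \<longrightarrow> op_rel T \<phi> f h u v (\<lambda>x. x = 0) t"
    and \<alpha>_ge: "AE t in lebesgue. t \<in> {0..T} \<longrightarrow> op_rel T \<phi> f h \<alpha> \<alpha>' (\<lambda>x. x \<ge> a) t"
  obtains \<rho> where "\<rho> > 0"
    and "AE t in lebesgue. t \<in> {0..T} \<and> \<bar>t - t0\<bar> < \<rho> \<longrightarrow>
           (\<exists>D. ((\<lambda>s. \<phi> (v s) - \<phi> (\<alpha>' s)) has_real_derivative D) (at t within {0..T}) \<and> D \<le> - a/4)"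
proof -
  have "a/4 > 0" using \<open>a > 0\<close> by simp
  then obtain d where "d > 0" and h_close: "AE t in lebesgue. t \<in> {0..T} \<and> \<bar>t - t0\<bar> < d \<longrightarrow>
      (\<forall>z. \<bar>z - \<alpha> t0\<bar> < d \<longrightarrow> \<bar>h t z - h t (\<alpha> t0)\<bar> < a/4)"
    using \<open>cond_A0 T h\<close> t0(1) unfolding cond_A0_def by blast
  define k where "k t = f (u t) * v t - f (\<alpha> t) * \<alpha>' t" for t
  have "continuous_on {0..T} k"
    unfolding k_def using continuous_on_compose2[OF f cont(1)] continuous_on_compose2[OF f cont(3)]
    by (intro continuous_on_diff continuous_on_mult cont) auto
  have near: "\<exists>r>0. \<forall>t\<in>{0..T}. \<bar>t - t0\<bar> < r \<longrightarrow> \<bar>g t - g t0\<bar> < e"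
    if "continuous_on {0..T} g" "e > 0" for g :: "real \<Rightarrow> real" and e
    using that t0(1) unfolding continuous_on_iff dist_real_def by blast
  obtain r1 r2 r3 where "r1 > 0" "r2 > 0" "r3 > 0"
    and r1: "\<And>t. t \<in> {0..T} \<Longrightarrow> \<bar>t - t0\<bar> < r1 \<Longrightarrow> \<bar>k t - k t0\<bar> < a/4"
    and r2: "\<And>t. t \<in> {0..T} \<Longrightarrow> \<bar>t - t0\<bar> < r2 \<Longrightarrow> \<bar>u t - u t0\<bar> < d"
    and r3: "\<And>t. t \<in> {0..T} \<Longrightarrow> \<bar>t - t0\<bar> < r3 \<Longrightarrow> \<bar>\<alpha> t - \<alpha> t0\<bar> < d"
    using near[OF \<open>continuous_on {0..T} k\<close> \<open>a/4 > 0\<close>] near[OF cont(1) \<open>d > 0\<close>]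
      near[OF cont(3) \<open>d > 0\<close>] by metis
  define \<rho> where "\<rho> = min d (min r1 (min r2 r3))"
  have "AE t in lebesgue. t \<in> {0..T} \<and> \<bar>t - t0\<bar> < \<rho> \<longrightarrow>
      (\<exists>D. ((\<lambda>s. \<phi> (v s) - \<phi> (\<alpha>' s)) has_real_derivative D) (at t within {0..T}) \<and> D \<le> - a/4)"
    using u_eq \<alpha>_ge h_close
  proof eventually_elim
    case (elim t)
    show ?case
    proof
      assume t: "t \<in> {0..T} \<and> \<bar>t - t0\<bar> < \<rho>"
      have "\<bar>k t\<bar> < a/4" "\<bar>h t (u t) - h t (\<alpha> t0)\<bar> < a/4" "\<bar>h t (\<alpha> t) - h t (\<alpha> t0)\<bar> < a/4"
        using r1[of t] r2[of t] r3[of t] elim(3) t t0 unfolding \<rho>_def by (auto simp: k_def)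
      moreover have "op_rel T \<phi> f h u v (\<lambda>x. x = 0) t" "op_rel T \<phi> f h \<alpha> \<alpha>' (\<lambda>x. x \<ge> a) t"
        using elim(1,2) t by blast+
      ultimately show "\<exists>D. ((\<lambda>s. \<phi> (v s) - \<phi> (\<alpha>' s)) has_real_derivative D) (at t within {0..T})
          \<and> D \<le> - a/4"
        unfolding k_def by (rule op_rel_gap_derivative_le[rotated 2])
    qed
  qed
  moreover have "\<rho> > 0" using \<open>d > 0\<close> \<open>r1 > 0\<close> \<open>r2 > 0\<close> \<open>r3 > 0\<close> unfolding \<rho>_def by simp
  ultimately show thesis using that by blast
qed

lemma C1_T_continuous:
  assumes "C1_T T u v"
  shows "continuous_on {0..T} u" and "continuous_on {0..T} v"
  using assms DERIV_continuous_on unfolding C1_T_def by blast+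

lemma derivative_gt_before_contact:
  fixes T a t0 :: real and \<phi> f u v \<alpha> \<alpha>' :: "real \<Rightarrow> real" and h :: "real \<Rightarrow> real \<Rightarrow> real"
  assumes "strict_mono \<phi>" and "continuous_on UNIV f" and "cond_A0 T h" and "a > 0"
    and \<alpha>: "in_D T \<phi> \<alpha> \<alpha>'"
    and \<alpha>_ge: "AE t in lebesgue. t \<in> {0..T} \<longrightarrow> op_rel T \<phi> f h \<alpha> \<alpha>' (\<lambda>x. x \<ge> a) t"
    and u: "in_D T \<phi> u v"
    and u_eq: "AE t in lebesgue. t \<in> {0..T} \<longrightarrow> op_rel T \<phi> f h u v (\<lambda>x. x = 0) t"
    and t0: "t0 \<in> {0<..T}" "u t0 = \<alpha> t0" "v t0 = \<alpha>' t0"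
  obtains s0 where "0 < s0" and "s0 < t0" and "\<And>s. s0 \<le> s \<Longrightarrow> s < t0 \<Longrightarrow> \<alpha>' s < v s"
proof -
  have ac: "abs_continuous_on {0..T} (\<lambda>s. \<phi> (v s))" "abs_continuous_on {0..T} (\<lambda>s. \<phi> (\<alpha>' s))"
    and cont: "continuous_on {0..T} u" "continuous_on {0..T} v"
      "continuous_on {0..T} \<alpha>" "continuous_on {0..T} \<alpha>'"
    using u \<alpha> C1_T_continuous unfolding in_D_def by blast+
  obtain \<rho> where "\<rho> > 0" and "AE t in lebesgue. t \<in> {0..T} \<and> \<bar>t - t0\<bar> < \<rho> \<longrightarrow>
      (\<exists>D. ((\<lambda>s. \<phi> (v s) - \<phi> (\<alpha>' s)) has_real_derivative D) (at t within {0..T}) \<and> D \<le> - a/4)"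
    using phi_derivative_gap_near_contact[OF assms(2-4) cont _ t0(2,3) u_eq \<alpha>_ge] t0(1) by auto
  then obtain N where "negligible N" and gap: "\<And>t. t \<in> {0..T} \<Longrightarrow> \<bar>t - t0\<bar> < \<rho> \<Longrightarrow> t \<notin> N \<Longrightarrow>
      \<exists>D. ((\<lambda>s. \<phi> (v s) - \<phi> (\<alpha>' s)) has_real_derivative D) (at t within {0..T}) \<and> D \<le> - a/4"
    unfolding eventually_ae_filter_negligible by blast
  define s0 where "s0 = max (t0/2) (t0 - \<rho>/2)"
  have s0: "0 < s0" "s0 < t0" "t0 - s0 < \<rho>" using t0(1) \<open>\<rho> > 0\<close> unfolding s0_def by auto
  have "\<alpha>' s < v s" if s: "s0 \<le> s" "s < t0" for s
  proof -
    have "(\<phi> (v t0) - \<phi> (\<alpha>' t0)) - (\<phi> (v s) - \<phi> (\<alpha>' s)) \<le> - a/4 * (t0 - s)"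
    proof (rule abs_continuous_on_increment_le[OF _ _ abs_continuous_on_diff[OF ac] \<open>negligible N\<close>])
      show "s \<le> t0" "{s..t0} \<subseteq> {0..T}" using s s0 t0(1) by auto
    qed (use gap s s0 t0(1) in auto)
    moreover have "- a/4 * (t0 - s) < 0" using \<open>a > 0\<close> s by (simp add: mult_neg_pos)
    ultimately have "\<phi> (\<alpha>' s) < \<phi> (v s)" using t0(3) by simp
    then show ?thesis using \<open>strict_mono \<phi>\<close> by (simp add: strict_mono_less)
  qed
  with s0 that show thesis by blast
qed

lemma periodic_solution_above_lower_solution_no_contact:
  fixes T a t0 :: real and \<phi> f u v \<alpha> \<alpha>' :: "real \<Rightarrow> real" and h :: "real \<Rightarrow> real \<Rightarrow> real"
  assumes "T > 0" and "strict_mono \<phi>" and "continuous_on UNIV f" and "cond_A0 T h" and "a > 0"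
    and \<alpha>: "in_D T \<phi> \<alpha> \<alpha>'"
    and \<alpha>_ge: "AE t in lebesgue. t \<in> {0..T} \<longrightarrow> op_rel T \<phi> f h \<alpha> \<alpha>' (\<lambda>x. x \<ge> a) t"
    and u: "in_D T \<phi> u v"
    and u_eq: "AE t in lebesgue. t \<in> {0..T} \<longrightarrow> op_rel T \<phi> f h u v (\<lambda>x. x = 0) t"
    and below: "\<And>t. t \<in> {0..T} \<Longrightarrow> \<alpha> t \<le> u t" and t0: "t0 \<in> {0<..T}"
  shows "\<alpha> t0 < u t0"
proof (rule ccontr)
  assume "\<not> \<alpha> t0 < u t0"
  then have contact: "u t0 = \<alpha> t0" using below[of t0] t0 by force
  have C1: "C1_T T u v" "C1_T T \<alpha> \<alpha>'" using u \<alpha> unfolding in_D_def by auto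
  have "v t0 = \<alpha>' t0" using C1_T_contact_derivative_eq[OF \<open>T > 0\<close> C1 below t0 contact] .
  then obtain s0 where s0: "0 < s0" "s0 < t0" and gap: "\<And>s. s0 \<le> s \<Longrightarrow> s < t0 \<Longrightarrow> \<alpha>' s < v s"
    using derivative_gt_before_contact[OF assms(2-9) t0 contact] by blast
  have "u s0 - \<alpha> s0 < u t0 - \<alpha> t0"
  proof (rule DERIV_pos_imp_increasing_open[OF s0(2)])
    fix s assume "s0 < s" "s < t0"
    then have inner: "s \<in> interior {0..T}" using s0 t0 by auto
    then have "s \<in> {0..T}" using interior_subset by blast
    then have "((\<lambda>s. u s - \<alpha> s) has_real_derivative v s - \<alpha>' s) (at s within {0..T})"
      using C1 unfolding C1_T_def by (auto intro!: derivative_eq_intros)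
    then have "((\<lambda>s. u s - \<alpha> s) has_real_derivative v s - \<alpha>' s) (at s)"
      unfolding at_within_interior[OF inner] .
    then show "\<exists>y. ((\<lambda>s. u s - \<alpha> s) has_real_derivative y) (at s) \<and> y > 0"
      using gap \<open>s0 < s\<close> \<open>s < t0\<close> by force
  next
    show "continuous_on {s0..t0} (\<lambda>s. u s - \<alpha> s)"
      using C1_T_continuous(1)[OF C1(1)] C1_T_continuous(1)[OF C1(2)] s0 t0
      by (intro continuous_on_diff) (auto intro: continuous_on_subset)
  qed
  then show False using below[of s0] contact s0 t0 by auto
qed

theorem lemma2p1:
  fixes T a :: real and \<phi> f \<alpha> \<alpha>' :: "real \<Rightarrow> real" and h :: "real \<Rightarrow> real \<Rightarrow> real"
  assumes "T > 0"
    and "strict_mono \<phi>" and "\<exists>\<psi>. homeomorphism UNIV UNIV \<phi> \<psi>" and "\<phi> 0 = 0"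
    and "continuous_on UNIV f"
    and "caratheodory T h" and "cond_A0 T h"
    and "a > 0"
    and "in_D T \<phi> \<alpha> \<alpha>'"
    and "AE t in lebesgue. t \<in> {0..T} \<longrightarrow> op_rel T \<phi> f h \<alpha> \<alpha>' (\<lambda>x. x \<ge> a) t"
  shows "strict_lower_solution T \<phi> f h \<alpha>"
proof -
  have "AE t in lebesgue. t \<in> {0..T} \<longrightarrow> op_rel T \<phi> f h \<alpha> \<alpha>' (\<lambda>x. x > 0) t"
    using assms(10) by eventually_elim (use \<open>a > 0\<close> in \<open>auto simp: op_rel_def\<close>)
  moreover have "\<alpha> t < u t"
    if "periodic_solution T \<phi> f h u" and below: "\<forall>t\<in>{0..T}. u t \<ge> \<alpha> t" and "t \<in> {0..T}" for u t
  proof -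
    obtain v where u: "in_D T \<phi> u v"
      and u_eq: "AE t in lebesgue. t \<in> {0..T} \<longrightarrow> op_rel T \<phi> f h u v (\<lambda>x. x = 0) t"
      using \<open>periodic_solution T \<phi> f h u\<close> unfolding periodic_solution_def by blast
    have no_contact: "\<alpha> t' < u t'" if "t' \<in> {0<..T}" for t'
      using below by (intro periodic_solution_above_lower_solution_no_contact
          [OF assms(1,2,5,7,8,9,10) u u_eq _ that]) auto
    show ?thesis
    proof (cases "t = 0")
      case True
      have "u 0 = u T" "\<alpha> 0 = \<alpha> T" using u assms(9) unfolding in_D_def C1_T_def by auto
      then show ?thesis using no_contact[of T] \<open>T > 0\<close> True by simp
    qed (use no_contact \<open>t \<in> {0..T}\<close> in auto)
  qed
  ultimately show ?thesis unfolding strict_lower_solution_def using assms(9) by blast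
qed

end
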